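(* Let $U=\ln Z_2-H_S(\underline\theta)$ and $T=Z_1/Z_2\in(0,1]$, and let $\mu=\max\{\theta_1,\theta_2\}/\min\{\theta_1,\theta_2\}\ge1$. For every $t\in(0,1]$, the conditional density of $U$ given $T=t$ is $$f_{1,\underline\theta}(u\mid t)=\frac{\mu^{-\alpha}e^{2\alpha u}e^{-(1+t/\mu)e^{u}}+\mu^{\alpha}e^{2\alpha u}e^{-(1+t\mu)e^{u}}}{\Gamma(2\alpha)\left[\dfrac{1}{\mu^{\alpha}(1+t/\mu)^{2\alpha}}+\dfrac{\mu^{\alpha}}{(1+t\mu)^{2\alpha}}\right]},\qquad -\infty<u<\infty.$$
   Context: Fix a known $\alpha>0$. $X_1,X_2$ are independent, $X_i$ having density $f(x\mid\theta_i)=\frac{x^{\alpha-1}e^{-x/\theta_i}}{\Gamma(\alpha)\theta_i^{\alpha}}$, $x>0$, with unknown $\underline\theta=(\theta_1,\theta_2)\in(0,\infty)^2$. $Z_1=\min\{X_1,X_2\}$, $Z_2=\max\{X_1,X_2\}$. $H_S(\underline\theta)=\ln\theta_1\, I(X_1\ge X_2)+\ln\theta_2\, I(X_1<X_2)$. *)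

theory Defs
  imports "HOL-Probability.Probability"
begin

definition gamma_dens :: "real \<Rightarrow> real \<Rightarrow> real \<Rightarrow> real" where
  "gamma_dens \<alpha> \<theta> x =
     (if 0 < x then x powr (\<alpha> - 1) * exp (- x / \<theta>) / (Gamma \<alpha> * \<theta> powr \<alpha>) else 0)"

definition cond_dens :: "real \<Rightarrow> real \<Rightarrow> real \<Rightarrow> real \<Rightarrow> real" where
  "cond_dens \<alpha> \<mu> t u =
     (\<mu> powr (-\<alpha>) * exp (2 * \<alpha> * u) * exp (- (1 + t / \<mu>) * exp u)
      + \<mu> powr \<alpha> * exp (2 * \<alpha> * u) * exp (- (1 + t * \<mu>) * exp u))
     / (Gamma (2 * \<alpha>) *
        (1 / (\<mu> powr \<alpha> * (1 + t / \<mu>) powr (2 * \<alpha>)) + \<mu> powr \<alpha> / (1 + t * \<mu>) powr (2 * \<alpha>)))"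

end

theory Submission
  imports Defs
begin

text \<open>
  On the event \<open>X\<^sub>1 \<ge> X\<^sub>2\<close> we have \<open>U = ln (X\<^sub>1/\<theta>\<^sub>1)\<close> and \<open>T = X\<^sub>2/X\<^sub>1\<close>; the substitutions
  \<open>X\<^sub>2 = X\<^sub>1 t\<close>, \<open>X\<^sub>1 = \<theta>\<^sub>1 e\<^sup>u\<close> turn the product of the two Gamma densities into an explicit
  joint density of \<open>(U, T)\<close>, and symmetrically on \<open>X\<^sub>1 < X\<^sub>2\<close>. The sum of the two
  contributions factors as (marginal density of \<open>T\<close>) \<open>\<times>\<close> \<open>cond_dens\<close>, where \<open>cond_dens \<alpha> \<mu> t\<close>
  integrates to \<open>1\<close> because \<open>\<integral> e\<^sup>s\<^sup>u e\<^sup>-\<^sup>c\<^sup>e\<^sup>u du = \<Gamma>(s)/c\<^sup>s\<close>. Such a factorisation of the joint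
  density is exactly the statement that \<open>cond_dens\<close> is a version of the conditional density.
\<close>

lemma SUP_indicator_incseq:
  assumes "incseq S"
  shows "(SUP n. indicator (S n) x :: ennreal) = indicator (\<Union>n. S n) x"
proof (cases "x \<in> (\<Union>n. S n)")
  case True
  then obtain n where n: "x \<in> S n" by auto
  have "(SUP n. indicator (S n) x :: ennreal) = 1"
  proof (rule antisym)
    show "(SUP n. indicator (S n) x :: ennreal) \<le> 1"
      by (rule SUP_least) (auto split: split_indicator)
    show "1 \<le> (SUP n. indicator (S n) x :: ennreal)"
      using n by (intro SUP_upper2[of n]) auto
  qed
  with True show ?thesis by simp
qed simp

lemma nn_integral_exp_substitution:
  fixes F :: "real \<Rightarrow> ennreal"
  assumes [measurable]: "F \<in> borel_measurable borel"
  shows "(\<integral>\<^sup>+u. F (exp u) * ennreal (exp u) \<partial>lborel) = (\<integral>\<^sup>+x. indicator {0<..} x * F x \<partial>lborel)"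
proof -
  define S where "S n = {exp (- real n - 1) .. exp (real n + 1)}" for n
  define R where "R n = {- real n - 1 .. real n + 1}" for n
  have incS: "incseq S" unfolding S_def incseq_def by auto
  have incR: "incseq R" unfolding R_def incseq_def by auto
  have US: "(\<Union>n. S n) = {0<..}"
  proof safe
    fix x :: real and n :: nat
    assume "x \<in> S n"
    then show "0 < x" unfolding S_def by (auto intro: less_le_trans[OF exp_gt_zero])
  next
    fix x :: real
    assume "0 < x"
    obtain n :: nat where "\<bar>ln x\<bar> \<le> real n" using real_arch_simple by blast
    then have "exp (- real n - 1) \<le> exp (ln x)" "exp (ln x) \<le> exp (real n + 1)"
      by auto
    then have "x \<in> S n" using \<open>0 < x\<close> unfolding S_def by simp
    then show "x \<in> (\<Union>n. S n)" by auto
  qed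
  have UR: "(\<Union>n. R n) = UNIV"
  proof safe
    fix x :: real
    obtain n :: nat where "\<bar>x\<bar> \<le> real n" using real_arch_simple by blast
    then have "x \<in> R n" unfolding R_def by auto
    then show "x \<in> (\<Union>n. R n)" by auto
  qed auto
  have on_compacts: "(\<integral>\<^sup>+x. F x * indicator (S n) x \<partial>lborel)
      = (\<integral>\<^sup>+u. F (exp u) * ennreal (exp u) * indicator (R n) u \<partial>lborel)" for n
    unfolding S_def R_def
    by (rule nn_integral_substitution_aux) (auto intro!: continuous_intros derivative_eq_intros)
  have "(\<integral>\<^sup>+x. indicator {0<..} x * F x \<partial>lborel) = (\<integral>\<^sup>+x. (SUP n. F x * indicator (S n) x) \<partial>lborel)"
    by (intro nn_integral_cong)
      (simp add: SUP_mult_left_ennreal[symmetric] SUP_indicator_incseq[OF incS] US mult.commute)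
  also have "\<dots> = (SUP n. \<integral>\<^sup>+x. F x * indicator (S n) x \<partial>lborel)"
    by (rule nn_integral_monotone_convergence_SUP)
      (use incS in \<open>auto simp: incseq_def le_fun_def intro!: mult_left_mono split: split_indicator\<close>,
       simp add: S_def)
  also have "\<dots> = (SUP n. \<integral>\<^sup>+u. F (exp u) * ennreal (exp u) * indicator (R n) u \<partial>lborel)"
    by (simp add: on_compacts)
  also have "\<dots> = (\<integral>\<^sup>+u. (SUP n. F (exp u) * ennreal (exp u) * indicator (R n) u) \<partial>lborel)"
    by (rule nn_integral_monotone_convergence_SUP[symmetric])
      (use incR in \<open>auto simp: incseq_def le_fun_def intro!: mult_left_mono split: split_indicator\<close>,
       simp add: R_def)
  also have "\<dots> = (\<integral>\<^sup>+u. F (exp u) * ennreal (exp u) \<partial>lborel)"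
    by (intro nn_integral_cong) (simp add: SUP_mult_left_ennreal[symmetric] SUP_indicator_incseq[OF incR] UR)
  finally show ?thesis ..
qed

lemma nn_integral_scaled_exp_substitution:
  fixes F :: "real \<Rightarrow> ennreal"
  assumes [measurable]: "F \<in> borel_measurable borel" and "a > 0"
  shows "(\<integral>\<^sup>+u. F (a * exp u) * ennreal (a * exp u) \<partial>lborel) = (\<integral>\<^sup>+x. indicator {0<..} x * F x \<partial>lborel)"
proof -
  have "(\<integral>\<^sup>+x. indicator {0<..} x * F x \<partial>lborel) = (\<integral>\<^sup>+v. F (exp v) * ennreal (exp v) \<partial>lborel)"
    by (rule nn_integral_exp_substitution[symmetric]) simp
  also have "\<dots> = ennreal \<bar>1\<bar> * (\<integral>\<^sup>+u. F (exp (ln a + 1 * u)) * ennreal (exp (ln a + 1 * u)) \<partial>lborel)"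
    by (rule nn_integral_real_affine) auto
  also have "\<dots> = (\<integral>\<^sup>+u. F (a * exp u) * ennreal (a * exp u) \<partial>lborel)"
    using \<open>a > 0\<close> by (simp add: exp_add)
  finally show ?thesis ..
qed

lemma nn_integral_gamma_kernel:
  fixes c s :: real
  assumes c: "c > 0" and s: "s > 0"
  shows "(\<integral>\<^sup>+x. indicator {0<..} x * ennreal (x powr (s - 1) * exp (- c * x)) \<partial>lborel)
         = ennreal (Gamma s / c powr s)"
proof -
  define I where "I = (\<integral>\<^sup>+x. indicator {0<..} x * ennreal (x powr (s - 1) * exp (- c * x)) \<partial>lborel)"
  have "ennreal (Gamma s) = (\<integral>\<^sup>+y. ennreal (indicator {0..} y * y powr (s - 1) / exp y) \<partial>lborel)"
    using Gamma_conv_nn_integral_real[OF s] by simp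
  also have "\<dots> = \<bar>c\<bar> * (\<integral>\<^sup>+x. ennreal (indicator {0..} (0 + c * x) * (0 + c * x) powr (s - 1) / exp (0 + c * x)) \<partial>lborel)"
    using c by (intro nn_integral_real_affine) auto
  also have "(\<integral>\<^sup>+x. ennreal (indicator {0..} (0 + c * x) * (0 + c * x) powr (s - 1) / exp (0 + c * x)) \<partial>lborel)
      = (\<integral>\<^sup>+x. ennreal (c powr (s - 1)) * (indicator {0<..} x * ennreal (x powr (s - 1) * exp (- c * x))) \<partial>lborel)"
  proof (intro nn_integral_cong)
    fix x :: real
    show "ennreal (indicator {0..} (0 + c * x) * (0 + c * x) powr (s - 1) / exp (0 + c * x))
      = ennreal (c powr (s - 1)) * (indicator {0<..} x * ennreal (x powr (s - 1) * exp (- c * x)))"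
      using c
      by (cases "x > 0") (auto simp: powr_mult ennreal_mult'[symmetric] exp_minus field_simps indicator_def zero_le_mult_iff)
  qed
  also have "\<dots> = ennreal (c powr (s - 1)) * I"
    unfolding I_def by (rule nn_integral_cmult) simp
  finally have "ennreal (Gamma s) = ennreal (c * c powr (s - 1)) * I"
    using c by (simp add: ennreal_mult mult.assoc)
  also have "c * c powr (s - 1) = c powr s"
    using c powr_add[of c 1 "s - 1"] by simp
  finally have Gamma_eq: "ennreal (Gamma s) = ennreal (c powr s) * I" .
  have "I = ennreal (1 / c powr s) * (ennreal (c powr s) * I)"
    using c by (simp add: mult.assoc[symmetric] ennreal_mult'[symmetric])
  also have "\<dots> = ennreal (Gamma s / c powr s)"
    using c s by (simp add: Gamma_eq[symmetric] ennreal_mult'[symmetric] Gamma_real_pos)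
  finally show ?thesis unfolding I_def .
qed

lemma nn_integral_exp_gamma_kernel:
  fixes s c :: real
  assumes "s > 0" and "c > 0"
  shows "(\<integral>\<^sup>+u. ennreal (exp (s * u) * exp (- c * exp u)) \<partial>lborel) = ennreal (Gamma s / c powr s)"
proof -
  have "exp (s * u) = exp u powr (s - 1) * exp u" for u
    by (simp add: powr_def exp_add[symmetric] algebra_simps)
  then have "(\<integral>\<^sup>+u. ennreal (exp (s * u) * exp (- c * exp u)) \<partial>lborel)
     = (\<integral>\<^sup>+u. ennreal (exp u powr (s - 1) * exp (- c * exp u)) * ennreal (exp u) \<partial>lborel)"
    by (intro nn_integral_cong) (simp add: ennreal_mult'[symmetric] mult_ac)
  also have "\<dots> = (\<integral>\<^sup>+x. indicator {0<..} x * ennreal (x powr (s - 1) * exp (- c * x)) \<partial>lborel)"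
    by (rule nn_integral_exp_substitution) simp
  also have "\<dots> = ennreal (Gamma s / c powr s)"
    using assms by (intro nn_integral_gamma_kernel)
  finally show ?thesis .
qed

definition cond_dens_norm :: "real \<Rightarrow> real \<Rightarrow> real \<Rightarrow> real" where
  "cond_dens_norm \<alpha> \<mu> t = Gamma (2 * \<alpha>) *
     (1 / (\<mu> powr \<alpha> * (1 + t / \<mu>) powr (2 * \<alpha>)) + \<mu> powr \<alpha> / (1 + t * \<mu>) powr (2 * \<alpha>))"

lemma cond_dens_norm_pos: "\<alpha> > 0 \<Longrightarrow> \<mu> > 0 \<Longrightarrow> t > 0 \<Longrightarrow> cond_dens_norm \<alpha> \<mu> t > 0"
  using add_pos_pos[of 1 "t / \<mu>"] add_pos_pos[of 1 "t * \<mu>"]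
  unfolding cond_dens_norm_def by (intro mult_pos_pos add_pos_pos divide_pos_pos) (auto simp: Gamma_real_pos)

lemma cond_dens_eq:
  "cond_dens \<alpha> \<mu> t u =
     (\<mu> powr (-\<alpha>) * exp (2 * \<alpha> * u) * exp (- (1 + t / \<mu>) * exp u)
      + \<mu> powr \<alpha> * exp (2 * \<alpha> * u) * exp (- (1 + t * \<mu>) * exp u)) / cond_dens_norm \<alpha> \<mu> t"
  unfolding cond_dens_def cond_dens_norm_def ..

lemma cond_dens_nonneg: "\<alpha> > 0 \<Longrightarrow> \<mu> > 0 \<Longrightarrow> t > 0 \<Longrightarrow> cond_dens \<alpha> \<mu> t u \<ge> 0"
  unfolding cond_dens_eq using cond_dens_norm_pos[of \<alpha> \<mu> t] by simp

lemma cond_dens_measurable[measurable]: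
  "(\<lambda>(t, u). cond_dens \<alpha> \<mu> t u) \<in> borel_measurable (borel \<Otimes>\<^sub>M borel)"
  unfolding cond_dens_def by measurable

lemma nn_integral_cond_dens:
  fixes \<alpha> \<mu> t :: real
  assumes a: "\<alpha> > 0" and m: "\<mu> > 0" and t: "t > 0"
  shows "(\<integral>\<^sup>+ u. ennreal (cond_dens \<alpha> \<mu> t u) \<partial>lborel) = 1"
proof -
  define c1 where "c1 = 1 + t / \<mu>"
  define c2 where "c2 = 1 + t * \<mu>"
  have c1: "c1 > 0" and c2: "c2 > 0" using m t by (auto simp: c1_def c2_def intro!: add_pos_pos)
  define D where "D = cond_dens_norm \<alpha> \<mu> t"
  have D: "D > 0" unfolding D_def using a m t by (rule cond_dens_norm_pos)
  define E where "E c u = exp (2 * \<alpha> * u) * exp (- c * exp u)" for c u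
  have "cond_dens \<alpha> \<mu> t u = (\<mu> powr (-\<alpha>) / D) * E c1 u + (\<mu> powr \<alpha> / D) * E c2 u" for u
    unfolding cond_dens_eq D_def E_def c1_def c2_def by (simp add: add_divide_distrib)
  then have "(\<integral>\<^sup>+ u. ennreal (cond_dens \<alpha> \<mu> t u) \<partial>lborel)
     = (\<integral>\<^sup>+ u. ennreal (\<mu> powr (-\<alpha>) / D) * ennreal (E c1 u) + ennreal (\<mu> powr \<alpha> / D) * ennreal (E c2 u) \<partial>lborel)"
    using D by (intro nn_integral_cong) (simp add: E_def ennreal_plus[symmetric] ennreal_mult'[symmetric] del: ennreal_plus)
  also have "\<dots> = ennreal (\<mu> powr (-\<alpha>) / D) * (\<integral>\<^sup>+ u. ennreal (E c1 u) \<partial>lborel)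
      + ennreal (\<mu> powr \<alpha> / D) * (\<integral>\<^sup>+ u. ennreal (E c2 u) \<partial>lborel)"
    by (subst nn_integral_add) (auto simp: E_def nn_integral_cmult)
  also have "\<dots> = ennreal (\<mu> powr (-\<alpha>) / D * (Gamma (2 * \<alpha>) / c1 powr (2 * \<alpha>))
      + \<mu> powr \<alpha> / D * (Gamma (2 * \<alpha>) / c2 powr (2 * \<alpha>)))"
    using a c1 c2 D nn_integral_exp_gamma_kernel[of "2 * \<alpha>" c1] nn_integral_exp_gamma_kernel[of "2 * \<alpha>" c2]
    by (simp add: E_def Gamma_real_pos ennreal_mult'[symmetric] ennreal_plus[symmetric] del: ennreal_plus)
  also have "\<mu> powr (-\<alpha>) / D * (Gamma (2 * \<alpha>) / c1 powr (2 * \<alpha>)) + \<mu> powr \<alpha> / D * (Gamma (2 * \<alpha>) / c2 powr (2 * \<alpha>))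
      = cond_dens_norm \<alpha> \<mu> t / D"
    unfolding cond_dens_norm_def c1_def c2_def by (simp add: powr_minus divide_simps algebra_simps)
  finally show ?thesis using D by (simp add: D_def)
qed

lemma gamma_dens_nonneg: "\<alpha> > 0 \<Longrightarrow> \<theta> > 0 \<Longrightarrow> gamma_dens \<alpha> \<theta> x \<ge> 0"
  unfolding gamma_dens_def by (auto intro!: divide_nonneg_pos mult_pos_pos Gamma_real_pos)

lemma gamma_dens_measurable[measurable]: "gamma_dens \<alpha> \<theta> \<in> borel_measurable borel"
  unfolding gamma_dens_def by measurable

text \<open>Joint density of \<open>(ln (X/a), Y/X)\<close> at \<open>(u, t)\<close>, \<open>t > 0\<close>, for independent
  \<open>X \<sim> \<Gamma>(\<alpha>, a)\<close> and \<open>Y \<sim> \<Gamma>(\<alpha>, b)\<close>.\<close>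
definition log_ratio_dens :: "real \<Rightarrow> real \<Rightarrow> real \<Rightarrow> real \<Rightarrow> real \<Rightarrow> real" where
  "log_ratio_dens \<alpha> a b t u =
     t powr (\<alpha> - 1) / (Gamma \<alpha>)\<^sup>2 * (a / b) powr \<alpha> * exp (2 * \<alpha> * u) * exp (- (1 + t * a / b) * exp u)"

lemma log_ratio_dens_nonneg: "t > 0 \<Longrightarrow> a > 0 \<Longrightarrow> b > 0 \<Longrightarrow> log_ratio_dens \<alpha> a b t u \<ge> 0"
  unfolding log_ratio_dens_def by simp

lemma log_ratio_dens_measurable[measurable]:
  "(\<lambda>(t, u). log_ratio_dens \<alpha> a b t u) \<in> borel_measurable (borel \<Otimes>\<^sub>M borel)"
  unfolding log_ratio_dens_def by measurable

text \<open>The two factors \<open>x\<close> are the Jacobians of \<open>y = x t\<close> and of \<open>x = a e\<^sup>u\<close>.\<close>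
lemma gamma_dens_change_of_variables:
  fixes \<alpha> a b t u x :: real
  assumes a: "a > 0" and b: "b > 0" and t: "t > 0" and x: "x = a * exp u"
  shows "gamma_dens \<alpha> a x * x * gamma_dens \<alpha> b (x * t) * x = log_ratio_dens \<alpha> a b t u"
proof -
  have x_pos: "x > 0" using x a by simp
  have powers: "x powr (\<alpha> - 1) * (x * t) powr (\<alpha> - 1) * x * x
      = t powr (\<alpha> - 1) * (a powr \<alpha> * a powr \<alpha>) * exp (2 * \<alpha> * u)"
  proof -
    have "x powr (\<alpha> - 1) * (x * t) powr (\<alpha> - 1) * x * x = t powr (\<alpha> - 1) * (x powr \<alpha> * x powr \<alpha>)"
      using x_pos t by (simp add: powr_mult powr_diff field_simps)
    also have "x powr \<alpha> = a powr \<alpha> * exp (\<alpha> * u)"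
      using a by (simp add: x powr_def ln_mult distrib_left mult_exp_exp)
    moreover have "exp (2 * \<alpha> * u) = exp (\<alpha> * u) * exp (\<alpha> * u)"
      by (simp add: mult_exp_exp)
    ultimately show ?thesis
      by (simp add: mult_ac)
  qed
  have exps: "exp (- x / a) * exp (- (x * t) / b) = exp (- (1 + t * a / b) * exp u)"
    using a b by (simp add: x mult_exp_exp field_simps)
  have "gamma_dens \<alpha> a x * x * gamma_dens \<alpha> b (x * t) * x
      = (x powr (\<alpha> - 1) * (x * t) powr (\<alpha> - 1) * x * x) * (exp (- x / a) * exp (- (x * t) / b))
        / ((Gamma \<alpha>)\<^sup>2 * (a powr \<alpha> * b powr \<alpha>))"
    using x_pos t unfolding gamma_dens_def by (simp add: power2_eq_square mult_ac)
  also have "\<dots> = log_ratio_dens \<alpha> a b t u"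
    unfolding powers exps log_ratio_dens_def using a b by (simp add: powr_divide)
  finally show ?thesis .
qed

lemma nn_integral_gamma_log_substitution:
  fixes G :: "real \<Rightarrow> ennreal"
  assumes \<alpha>: "\<alpha> > 0" and a: "a > 0" and b: "b > 0" and [measurable]: "G \<in> borel_measurable borel"
  shows "(\<integral>\<^sup>+x. ennreal (gamma_dens \<alpha> a x) * ennreal x * ennreal (gamma_dens \<alpha> b (x * t)) * G (ln x - ln a) \<partial>lborel)
     = indicator {0<..} t * (\<integral>\<^sup>+u. G u * ennreal (log_ratio_dens \<alpha> a b t u) \<partial>lborel)"
proof -
  define \<Psi> where "\<Psi> x = ennreal (gamma_dens \<alpha> a x) * ennreal x * ennreal (gamma_dens \<alpha> b (x * t)) * G (ln x - ln a)" for x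
  have "(\<integral>\<^sup>+x. \<Psi> x \<partial>lborel) = (\<integral>\<^sup>+x. indicator {0<..} x * \<Psi> x \<partial>lborel)"
    by (intro nn_integral_cong) (auto simp: \<Psi>_def gamma_dens_def indicator_def)
  also have "\<dots> = (\<integral>\<^sup>+u. \<Psi> (a * exp u) * ennreal (a * exp u) \<partial>lborel)"
    using a by (intro nn_integral_scaled_exp_substitution[symmetric]) (simp add: \<Psi>_def)
  also have "\<dots> = (\<integral>\<^sup>+u. indicator {0<..} t * (G u * ennreal (log_ratio_dens \<alpha> a b t u)) \<partial>lborel)"
  proof (intro nn_integral_cong)
    fix u :: real
    define x where "x = a * exp u"
    have x_pos: "x > 0" using a by (simp add: x_def)
    have "ln x - ln a = u" using a by (simp add: x_def ln_mult)
    show "\<Psi> (a * exp u) * ennreal (a * exp u) = indicator {0<..} t * (G u * ennreal (log_ratio_dens \<alpha> a b t u))"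
    proof (cases "t > 0")
      case True
      have "\<Psi> x * ennreal x = G u * ennreal (gamma_dens \<alpha> a x * x * gamma_dens \<alpha> b (x * t) * x)"
        unfolding \<Psi>_def \<open>ln x - ln a = u\<close> using x_pos True gamma_dens_nonneg[OF \<alpha> a] gamma_dens_nonneg[OF \<alpha> b]
        by (simp add: ennreal_mult mult_ac)
      then show ?thesis
        unfolding x_def[symmetric] using True by (simp add: gamma_dens_change_of_variables[OF a b True x_def])
    next
      case False
      then have "x * t \<le> 0" using x_pos by (simp add: mult_nonneg_nonpos)
      then show ?thesis using False by (simp add: \<Psi>_def gamma_dens_def x_def)
    qed
  qed
  also have "\<dots> = indicator {0<..} t * (\<integral>\<^sup>+u. G u * ennreal (log_ratio_dens \<alpha> a b t u) \<partial>lborel)"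
    by (rule nn_integral_cmult) simp
  finally show ?thesis unfolding \<Psi>_def .
qed

lemma nn_integral_gamma_pair_log_ratio:
  fixes H :: "real \<Rightarrow> real \<Rightarrow> ennreal"
  assumes \<alpha>: "\<alpha> > 0" and a: "a > 0" and b: "b > 0" and [measurable]: "S \<in> sets borel"
    and [measurable]: "case_prod H \<in> borel_measurable (borel \<Otimes>\<^sub>M borel)"
  shows "(\<integral>\<^sup>+x. \<integral>\<^sup>+y. ennreal (gamma_dens \<alpha> a x) * ennreal (gamma_dens \<alpha> b y)
             * indicator S (y / x) * H (ln x - ln a) (y / x) \<partial>lborel \<partial>lborel)
     = (\<integral>\<^sup>+t. indicator (S \<inter> {0<..}) t * (\<integral>\<^sup>+u. H u t * ennreal (log_ratio_dens \<alpha> a b t u) \<partial>lborel) \<partial>lborel)"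
proof -
  define \<Psi> where "\<Psi> x t = ennreal (gamma_dens \<alpha> a x) * ennreal x * ennreal (gamma_dens \<alpha> b (x * t))
      * (indicator S t * H (ln x - ln a) t)" for x t
  have inner: "(\<integral>\<^sup>+y. ennreal (gamma_dens \<alpha> a x) * ennreal (gamma_dens \<alpha> b y) * indicator S (y / x)
      * H (ln x - ln a) (y / x) \<partial>lborel) = (\<integral>\<^sup>+t. \<Psi> x t \<partial>lborel)" for x
  proof (cases "x > 0")
    case True
    have "(\<integral>\<^sup>+y. ennreal (gamma_dens \<alpha> a x) * ennreal (gamma_dens \<alpha> b y) * indicator S (y / x)
        * H (ln x - ln a) (y / x) \<partial>lborel)
       = ennreal \<bar>x\<bar> * (\<integral>\<^sup>+t. ennreal (gamma_dens \<alpha> a x) * ennreal (gamma_dens \<alpha> b (0 + x * t))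
        * indicator S ((0 + x * t) / x) * H (ln x - ln a) ((0 + x * t) / x) \<partial>lborel)"
      using True by (intro nn_integral_real_affine) auto
    also have "\<dots> = (\<integral>\<^sup>+t. ennreal x * (ennreal (gamma_dens \<alpha> a x) * ennreal (gamma_dens \<alpha> b (x * t))
        * indicator S t * H (ln x - ln a) t) \<partial>lborel)"
      using True by (subst nn_integral_cmult) auto
    finally show ?thesis
      unfolding \<Psi>_def by (simp add: mult_ac)
  qed (simp add: \<Psi>_def gamma_dens_def)
  have "(\<integral>\<^sup>+x. \<integral>\<^sup>+t. \<Psi> x t \<partial>lborel \<partial>lborel) = (\<integral>\<^sup>+t. \<integral>\<^sup>+x. \<Psi> x t \<partial>lborel \<partial>lborel)"
    by (rule lborel_pair.Fubini'[symmetric]) (simp add: \<Psi>_def)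
  also have "\<dots> = (\<integral>\<^sup>+t. indicator (S \<inter> {0<..}) t * (\<integral>\<^sup>+u. H u t * ennreal (log_ratio_dens \<alpha> a b t u) \<partial>lborel) \<partial>lborel)"
    unfolding \<Psi>_def
    by (subst nn_integral_gamma_log_substitution[OF \<alpha> a b, of "\<lambda>u. indicator S _ * H u _"])
       (simp_all add: nn_integral_cmult[symmetric] indicator_inter_arith mult_ac)
  finally show ?thesis
    by (simp add: inner)
qed

definition min_max_ratio_dens :: "real \<Rightarrow> real \<Rightarrow> real \<Rightarrow> real" where
  "min_max_ratio_dens \<alpha> \<mu> t = t powr (\<alpha> - 1) / (Gamma \<alpha>)\<^sup>2 * cond_dens_norm \<alpha> \<mu> t"

lemma log_ratio_dens_add_swap:
  fixes \<alpha> \<theta>1 \<theta>2 t u :: real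
  assumes \<alpha>: "\<alpha> > 0" and "\<theta>1 > 0" and "\<theta>2 > 0" and t: "t > 0"
  defines "\<mu> \<equiv> max \<theta>1 \<theta>2 / min \<theta>1 \<theta>2"
  shows "log_ratio_dens \<alpha> \<theta>1 \<theta>2 t u + log_ratio_dens \<alpha> \<theta>2 \<theta>1 t u
       = min_max_ratio_dens \<alpha> \<mu> t * cond_dens \<alpha> \<mu> t u"
proof -
  have "\<mu> > 0" using \<open>\<theta>1 > 0\<close> \<open>\<theta>2 > 0\<close> by (simp add: \<mu>_def)
  define N where "N = \<mu> powr (-\<alpha>) * exp (2 * \<alpha> * u) * exp (- (1 + t / \<mu>) * exp u)
      + \<mu> powr \<alpha> * exp (2 * \<alpha> * u) * exp (- (1 + t * \<mu>) * exp u)"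
  have swap: "(y / x) powr \<alpha> = (x / y) powr (- \<alpha>)" if "x > 0" "y > 0" for x y :: real
    using that by (simp add: powr_minus powr_divide)
  have "log_ratio_dens \<alpha> \<theta>1 \<theta>2 t u + log_ratio_dens \<alpha> \<theta>2 \<theta>1 t u = t powr (\<alpha> - 1) / (Gamma \<alpha>)\<^sup>2 * N"
  proof (cases "\<theta>2 \<le> \<theta>1")
    case True
    then have \<mu>: "\<mu> = \<theta>1 / \<theta>2" by (simp add: \<mu>_def max_def min_def)
    have "t * \<theta>1 / \<theta>2 = t * \<mu>" "t * \<theta>2 / \<theta>1 = t / \<mu>"
      using \<open>\<theta>1 > 0\<close> \<open>\<theta>2 > 0\<close> by (simp_all add: \<mu>)
    then show ?thesis
      unfolding log_ratio_dens_def N_def swap[OF \<open>\<theta>1 > 0\<close> \<open>\<theta>2 > 0\<close>] \<mu> by (simp add: algebra_simps)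
  next
    case False
    then have \<mu>: "\<mu> = \<theta>2 / \<theta>1" by (simp add: \<mu>_def max_def min_def)
    have "t * \<theta>1 / \<theta>2 = t / \<mu>" "t * \<theta>2 / \<theta>1 = t * \<mu>"
      using \<open>\<theta>1 > 0\<close> \<open>\<theta>2 > 0\<close> by (simp_all add: \<mu>)
    then show ?thesis
      unfolding log_ratio_dens_def N_def swap[OF \<open>\<theta>2 > 0\<close> \<open>\<theta>1 > 0\<close>] \<mu> by (simp add: algebra_simps)
  qed
  also have "N = cond_dens_norm \<alpha> \<mu> t * cond_dens \<alpha> \<mu> t u"
    unfolding cond_dens_eq N_def using cond_dens_norm_pos[OF \<alpha> \<open>\<mu> > 0\<close> t] by simp
  finally show ?thesis
    unfolding min_max_ratio_dens_def by simp
qed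

lemma nn_integral_log_ratio_dens_add_swap:
  fixes G :: "real \<Rightarrow> ennreal"
  assumes \<alpha>: "\<alpha> > 0" and \<theta>1: "\<theta>1 > 0" and \<theta>2: "\<theta>2 > 0" and t: "t > 0"
    and [measurable]: "G \<in> borel_measurable borel"
  defines "\<mu> \<equiv> max \<theta>1 \<theta>2 / min \<theta>1 \<theta>2"
  shows "(\<integral>\<^sup>+u. G u * ennreal (log_ratio_dens \<alpha> \<theta>1 \<theta>2 t u) \<partial>lborel)
       + (\<integral>\<^sup>+u. G u * ennreal (log_ratio_dens \<alpha> \<theta>2 \<theta>1 t u) \<partial>lborel)
     = (\<integral>\<^sup>+u. G u * ennreal (min_max_ratio_dens \<alpha> \<mu> t) * ennreal (cond_dens \<alpha> \<mu> t u) \<partial>lborel)"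
proof -
  have "\<mu> > 0" using \<theta>1 \<theta>2 by (simp add: \<mu>_def)
  have "(\<integral>\<^sup>+u. G u * ennreal (log_ratio_dens \<alpha> \<theta>1 \<theta>2 t u) \<partial>lborel)
      + (\<integral>\<^sup>+u. G u * ennreal (log_ratio_dens \<alpha> \<theta>2 \<theta>1 t u) \<partial>lborel)
     = (\<integral>\<^sup>+u. G u * ennreal (log_ratio_dens \<alpha> \<theta>1 \<theta>2 t u + log_ratio_dens \<alpha> \<theta>2 \<theta>1 t u) \<partial>lborel)"
    using log_ratio_dens_nonneg[OF t] \<theta>1 \<theta>2
    by (subst nn_integral_add[symmetric]) (auto intro!: nn_integral_cong simp: distrib_left ennreal_plus)
  also have "\<dots> = (\<integral>\<^sup>+u. G u * ennreal (min_max_ratio_dens \<alpha> \<mu> t) * ennreal (cond_dens \<alpha> \<mu> t u) \<partial>lborel)"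
    using cond_dens_norm_pos[OF \<alpha> \<open>\<mu> > 0\<close> t] cond_dens_nonneg[OF \<alpha> \<open>\<mu> > 0\<close> t]
    unfolding \<mu>_def log_ratio_dens_add_swap[OF \<alpha> \<theta>1 \<theta>2 t]
    by (intro nn_integral_cong) (simp add: t min_max_ratio_dens_def ennreal_mult[symmetric] mult.assoc)
  finally show ?thesis .
qed

lemma nn_integral_gamma_pair_min_max:
  fixes H :: "real \<Rightarrow> real \<Rightarrow> ennreal"
  assumes \<alpha>: "\<alpha> > 0" and \<theta>1: "\<theta>1 > 0" and \<theta>2: "\<theta>2 > 0"
    and [measurable]: "case_prod H \<in> borel_measurable (borel \<Otimes>\<^sub>M borel)"
  defines "\<mu> \<equiv> max \<theta>1 \<theta>2 / min \<theta>1 \<theta>2"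
  shows "(\<integral>\<^sup>+x. \<integral>\<^sup>+y. ennreal (gamma_dens \<alpha> \<theta>1 x) * ennreal (gamma_dens \<alpha> \<theta>2 y)
             * H (ln (max x y) - (if x \<ge> y then ln \<theta>1 else ln \<theta>2)) (min x y / max x y) \<partial>lborel \<partial>lborel)
     = (\<integral>\<^sup>+t. indicator {0<..1} t *
          (\<integral>\<^sup>+u. H u t * ennreal (min_max_ratio_dens \<alpha> \<mu> t) * ennreal (cond_dens \<alpha> \<mu> t u) \<partial>lborel) \<partial>lborel)"
proof -
  define I where "I a b t = (\<integral>\<^sup>+u. H u t * ennreal (log_ratio_dens \<alpha> a b t u) \<partial>lborel)" for a b t
  define g1 where "g1 x y = ennreal (gamma_dens \<alpha> \<theta>1 x) * ennreal (gamma_dens \<alpha> \<theta>2 y)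
      * indicator {..1} (y / x) * H (ln x - ln \<theta>1) (y / x)" for x y
  define g2 where "g2 y x = ennreal (gamma_dens \<alpha> \<theta>2 y) * ennreal (gamma_dens \<alpha> \<theta>1 x)
      * indicator {..<1} (x / y) * H (ln y - ln \<theta>2) (x / y)" for y x
  have [measurable]: "case_prod g1 \<in> borel_measurable (borel \<Otimes>\<^sub>M borel)"
    "(\<lambda>(x, y). g2 y x) \<in> borel_measurable (borel \<Otimes>\<^sub>M borel)"
    unfolding g1_def g2_def by measurable
  have "(\<integral>\<^sup>+x. \<integral>\<^sup>+y. ennreal (gamma_dens \<alpha> \<theta>1 x) * ennreal (gamma_dens \<alpha> \<theta>2 y)
             * H (ln (max x y) - (if x \<ge> y then ln \<theta>1 else ln \<theta>2)) (min x y / max x y) \<partial>lborel \<partial>lborel)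
      = (\<integral>\<^sup>+x. \<integral>\<^sup>+y. g1 x y + g2 y x \<partial>lborel \<partial>lborel)"
  proof (intro nn_integral_cong)
    fix x y :: real
    show "ennreal (gamma_dens \<alpha> \<theta>1 x) * ennreal (gamma_dens \<alpha> \<theta>2 y)
             * H (ln (max x y) - (if x \<ge> y then ln \<theta>1 else ln \<theta>2)) (min x y / max x y) = g1 x y + g2 y x"
      by (cases "x > 0 \<and> y > 0") (auto simp: g1_def g2_def gamma_dens_def indicator_def max_def min_def mult_ac)
  qed
  also have "\<dots> = (\<integral>\<^sup>+x. \<integral>\<^sup>+y. g1 x y \<partial>lborel \<partial>lborel) + (\<integral>\<^sup>+y. \<integral>\<^sup>+x. g2 y x \<partial>lborel \<partial>lborel)"
    by (simp add: nn_integral_add lborel_pair.Fubini'[of "\<lambda>x y. g2 y x"])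
  also have "(\<integral>\<^sup>+x. \<integral>\<^sup>+y. g1 x y \<partial>lborel \<partial>lborel) = (\<integral>\<^sup>+t. indicator {0<..1} t * I \<theta>1 \<theta>2 t \<partial>lborel)"
    unfolding g1_def I_def
    by (subst nn_integral_gamma_pair_log_ratio[OF \<alpha> \<theta>1 \<theta>2]) (auto intro!: nn_integral_cong simp: indicator_def)
  also have "(\<integral>\<^sup>+y. \<integral>\<^sup>+x. g2 y x \<partial>lborel \<partial>lborel) = (\<integral>\<^sup>+t. indicator {0<..1} t * I \<theta>2 \<theta>1 t \<partial>lborel)"
  proof -
    have "(\<integral>\<^sup>+y. \<integral>\<^sup>+x. g2 y x \<partial>lborel \<partial>lborel) = (\<integral>\<^sup>+t. indicator ({..<1} \<inter> {0<..}) t * I \<theta>2 \<theta>1 t \<partial>lborel)"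
      unfolding g2_def I_def by (rule nn_integral_gamma_pair_log_ratio[OF \<alpha> \<theta>2 \<theta>1]) simp_all
    also have "\<dots> = (\<integral>\<^sup>+t. indicator {0<..1} t * I \<theta>2 \<theta>1 t \<partial>lborel)"
      by (intro nn_integral_cong_AE)
        (use AE_lborel_singleton[of 1] in \<open>eventually_elim, auto simp: indicator_def\<close>)
    finally show ?thesis .
  qed
  also have "(\<integral>\<^sup>+t. indicator {0<..1} t * I \<theta>1 \<theta>2 t \<partial>lborel) + (\<integral>\<^sup>+t. indicator {0<..1} t * I \<theta>2 \<theta>1 t \<partial>lborel)
      = (\<integral>\<^sup>+t. indicator {0<..1} t * (I \<theta>1 \<theta>2 t + I \<theta>2 \<theta>1 t) \<partial>lborel)"
    by (simp add: I_def nn_integral_add distrib_left)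
  also have "\<dots> = (\<integral>\<^sup>+t. indicator {0<..1} t *
      (\<integral>\<^sup>+u. H u t * ennreal (min_max_ratio_dens \<alpha> \<mu> t) * ennreal (cond_dens \<alpha> \<mu> t u) \<partial>lborel) \<partial>lborel)"
    unfolding I_def \<mu>_def
    by (intro nn_integral_cong) (simp add: nn_integral_log_ratio_dens_add_swap[OF \<alpha> \<theta>1 \<theta>2] indicator_def)
  finally show ?thesis .
qed

text \<open>If the joint law of \<open>(U, T)\<close> has density \<open>c t \<cdot> f t u\<close> on \<open>S \<times> \<real>\<close> with every \<open>f t\<close>
  a probability density, then \<open>f\<close> is a conditional density of \<open>U\<close> given \<open>T\<close>: test the joint
  law once against \<open>1\<^sub>A(u) 1\<^sub>B(t)\<close> and once against \<open>1\<^sub>B(t) \<integral> 1\<^sub>A f t\<close>.\<close>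
lemma emeasure_eq_nn_integral_cond_density:
  fixes U T :: "'a \<Rightarrow> real" and f :: "real \<Rightarrow> real \<Rightarrow> real" and c :: "real \<Rightarrow> ennreal"
  assumes [measurable]: "U \<in> borel_measurable M" "T \<in> borel_measurable M"
    "(\<lambda>(t, u). f t u) \<in> borel_measurable (borel \<Otimes>\<^sub>M borel)"
    and joint: "\<And>H. case_prod H \<in> borel_measurable (borel \<Otimes>\<^sub>M borel) \<Longrightarrow>
      (\<integral>\<^sup>+\<omega>. H (U \<omega>) (T \<omega>) \<partial>M)
      = (\<integral>\<^sup>+t. indicator S t * (\<integral>\<^sup>+u. H u t * c t * ennreal (f t u) \<partial>lborel) \<partial>lborel)"
    and normalized: "\<And>t. t \<in> S \<Longrightarrow> (\<integral>\<^sup>+u. ennreal (f t u) \<partial>lborel) = 1"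
    and [measurable]: "A \<in> sets borel" "B \<in> sets borel"
  shows "emeasure M {\<omega> \<in> space M. U \<omega> \<in> A \<and> T \<omega> \<in> B}
       = (\<integral>\<^sup>+t. indicator B t * (\<integral>\<^sup>+u. indicator A u * ennreal (f t u) \<partial>lborel) \<partial>distr M borel T)"
proof -
  define K where "K t = (\<integral>\<^sup>+u. indicator A u * ennreal (f t u) \<partial>lborel)" for t
  have [measurable]: "(\<lambda>u. f t u) \<in> borel_measurable borel" for t
    by measurable
  have "(\<lambda>(t, u). indicator A u * ennreal (f t u)) \<in> borel_measurable (borel \<Otimes>\<^sub>M lborel)"
    using measurable_cong_sets[OF sets_pair_measure_cong refl] by measurable
  from lborel.borel_measurable_nn_integral[OF this]
  have [measurable]: "K \<in> borel_measurable borel"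
    unfolding K_def[abs_def] .
  have "emeasure M {\<omega> \<in> space M. U \<omega> \<in> A \<and> T \<omega> \<in> B} = (\<integral>\<^sup>+\<omega>. indicator A (U \<omega>) * indicator B (T \<omega>) \<partial>M)"
  proof -
    have event: "{\<omega> \<in> space M. U \<omega> \<in> A \<and> T \<omega> \<in> B} \<in> sets M" by measurable
    show ?thesis
      unfolding nn_integral_indicator[OF event, symmetric]
      by (intro nn_integral_cong) (auto split: split_indicator)
  qed
  also have "\<dots> = (\<integral>\<^sup>+t. indicator S t * (\<integral>\<^sup>+u. indicator A u * indicator B t * c t * ennreal (f t u) \<partial>lborel) \<partial>lborel)"
    by (rule joint) measurable
  also have "\<dots> = (\<integral>\<^sup>+t. indicator S t * (\<integral>\<^sup>+u. indicator B t * K t * c t * ennreal (f t u) \<partial>lborel) \<partial>lborel)"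
  proof (intro nn_integral_cong)
    fix t :: real
    have "(\<integral>\<^sup>+u. indicator A u * indicator B t * c t * ennreal (f t u) \<partial>lborel) = indicator B t * c t * K t"
      unfolding K_def by (subst nn_integral_cmult[symmetric]) (measurable, simp add: mult_ac)
    moreover have "(\<integral>\<^sup>+u. indicator B t * K t * c t * ennreal (f t u) \<partial>lborel) = indicator B t * K t * c t"
      if "t \<in> S"
      using normalized[OF that] by (simp add: nn_integral_cmult)
    ultimately show "indicator S t * (\<integral>\<^sup>+u. indicator A u * indicator B t * c t * ennreal (f t u) \<partial>lborel)
        = indicator S t * (\<integral>\<^sup>+u. indicator B t * K t * c t * ennreal (f t u) \<partial>lborel)"
      by (cases "t \<in> S") (simp_all add: mult_ac)
  qed
  also have "\<dots> = (\<integral>\<^sup>+\<omega>. indicator B (T \<omega>) * K (T \<omega>) \<partial>M)"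
    by (rule joint[symmetric]) measurable
  also have "\<dots> = (\<integral>\<^sup>+t. indicator B t * K t \<partial>distr M borel T)"
    by (rule nn_integral_distr[symmetric]) measurable
  finally show ?thesis
    unfolding K_def .
qed

lemma nn_integral_indep_gamma_min_max:
  fixes X1 X2 :: "'a \<Rightarrow> real" and H :: "real \<Rightarrow> real \<Rightarrow> ennreal"
  assumes "prob_space M" and \<alpha>: "\<alpha> > 0" and \<theta>1: "\<theta>1 > 0" and \<theta>2: "\<theta>2 > 0"
    and "prob_space.indep_var M borel X1 borel X2"
    and "distributed M lborel X1 (\<lambda>x. ennreal (gamma_dens \<alpha> \<theta>1 x))"
    and "distributed M lborel X2 (\<lambda>x. ennreal (gamma_dens \<alpha> \<theta>2 x))"
    and [measurable]: "case_prod H \<in> borel_measurable (borel \<Otimes>\<^sub>M borel)"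
  defines "\<mu> \<equiv> max \<theta>1 \<theta>2 / min \<theta>1 \<theta>2"
  shows "(\<integral>\<^sup>+\<omega>. H (ln (max (X1 \<omega>) (X2 \<omega>)) - (if X1 \<omega> \<ge> X2 \<omega> then ln \<theta>1 else ln \<theta>2))
                  (min (X1 \<omega>) (X2 \<omega>) / max (X1 \<omega>) (X2 \<omega>)) \<partial>M)
     = (\<integral>\<^sup>+t. indicator {0<..1} t *
          (\<integral>\<^sup>+u. H u t * ennreal (min_max_ratio_dens \<alpha> \<mu> t) * ennreal (cond_dens \<alpha> \<mu> t u) \<partial>lborel) \<partial>lborel)"
proof -
  interpret prob_space M by fact
  define G where "G x y = H (ln (max x y) - (if x \<ge> y then ln \<theta>1 else ln \<theta>2)) (min x y / max x y)" for x y
  have [measurable]: "case_prod G \<in> borel_measurable (lborel \<Otimes>\<^sub>M lborel)"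
    unfolding G_def by measurable
  have "indep_var lborel X1 lborel X2"
    using indep_var_compose[OF assms(5), of id lborel id lborel] by simp
  then have X12: "distributed M (lborel \<Otimes>\<^sub>M lborel) (\<lambda>\<omega>. (X1 \<omega>, X2 \<omega>))
      (\<lambda>(x, y). ennreal (gamma_dens \<alpha> \<theta>1 x) * ennreal (gamma_dens \<alpha> \<theta>2 y))"
    using assms(6,7) by (intro distributed_joint_indep) (simp_all add: lborel.sigma_finite_measure_axioms)
  have "(\<integral>\<^sup>+\<omega>. G (X1 \<omega>) (X2 \<omega>) \<partial>M) = (\<integral>\<^sup>+z. (\<lambda>(x, y). ennreal (gamma_dens \<alpha> \<theta>1 x) * ennreal (gamma_dens \<alpha> \<theta>2 y)) z
      * case_prod G z \<partial>(lborel \<Otimes>\<^sub>M lborel))"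
    by (subst distributed_nn_integral[OF X12]) simp_all
  also have "\<dots> = (\<integral>\<^sup>+x. \<integral>\<^sup>+y. ennreal (gamma_dens \<alpha> \<theta>1 x) * ennreal (gamma_dens \<alpha> \<theta>2 y) * G x y \<partial>lborel \<partial>lborel)"
    by (subst lborel.nn_integral_fst[symmetric]) (simp_all add: split_beta')
  finally show ?thesis
    unfolding G_def \<mu>_def using nn_integral_gamma_pair_min_max[OF \<alpha> \<theta>1 \<theta>2] by simp
qed

theorem lemma2p3:
  fixes M :: "'a measure" and X1 X2 :: "'a \<Rightarrow> real"
    and \<alpha> \<theta>1 \<theta>2 :: real
  assumes "prob_space M"
    and "\<alpha> > 0" and "\<theta>1 > 0" and "\<theta>2 > 0"
    and "prob_space.indep_var M borel X1 borel X2"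
    and "distributed M lborel X1 (\<lambda>x. ennreal (gamma_dens \<alpha> \<theta>1 x))"
    and "distributed M lborel X2 (\<lambda>x. ennreal (gamma_dens \<alpha> \<theta>2 x))"
  defines "U \<equiv> (\<lambda>\<omega>. ln (max (X1 \<omega>) (X2 \<omega>))
                 - (if X1 \<omega> \<ge> X2 \<omega> then ln \<theta>1 else ln \<theta>2))"
    and "T \<equiv> (\<lambda>\<omega>. min (X1 \<omega>) (X2 \<omega>) / max (X1 \<omega>) (X2 \<omega>))"
    and "\<mu> \<equiv> max \<theta>1 \<theta>2 / min \<theta>1 \<theta>2"
  shows "(\<forall>t\<in>{0<..1}. (\<forall>u. cond_dens \<alpha> \<mu> t u \<ge> 0)
            \<and> (\<integral>\<^sup>+ u. ennreal (cond_dens \<alpha> \<mu> t u) \<partial>lborel) = 1)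
       \<and> (\<forall>A \<in> sets borel. \<forall>B \<in> sets borel.
            emeasure M {\<omega> \<in> space M. U \<omega> \<in> A \<and> T \<omega> \<in> B}
            = (\<integral>\<^sup>+ t. indicator B t *
                   (\<integral>\<^sup>+ u. indicator A u * ennreal (cond_dens \<alpha> \<mu> t u) \<partial>lborel)
                 \<partial>(distr M borel T)))"
proof -
  note \<alpha> = \<open>\<alpha> > 0\<close> and \<theta>1 = \<open>\<theta>1 > 0\<close> and \<theta>2 = \<open>\<theta>2 > 0\<close>
  have [measurable]: "X1 \<in> borel_measurable M" "X2 \<in> borel_measurable M"
    using distributed_measurable[OF assms(6)] distributed_measurable[OF assms(7)] by simp_all
  have [measurable]: "U \<in> borel_measurable M" "T \<in> borel_measurable M"
    unfolding U_def T_def by measurable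
  have \<mu>: "\<mu> > 0" using \<theta>1 \<theta>2 by (simp add: \<mu>_def)
  have joint: "(\<integral>\<^sup>+\<omega>. H (U \<omega>) (T \<omega>) \<partial>M) = (\<integral>\<^sup>+t. indicator {0<..1} t *
      (\<integral>\<^sup>+u. H u t * ennreal (min_max_ratio_dens \<alpha> \<mu> t) * ennreal (cond_dens \<alpha> \<mu> t u) \<partial>lborel) \<partial>lborel)"
    if "case_prod H \<in> borel_measurable (borel \<Otimes>\<^sub>M borel)" for H
    unfolding U_def T_def \<mu>_def using assms(1-7) that by (rule nn_integral_indep_gamma_min_max)
  show ?thesis
    using cond_dens_nonneg[OF \<alpha> \<mu>] nn_integral_cond_dens[OF \<alpha> \<mu>]
      emeasure_eq_nn_integral_cond_density[OF _ _ cond_dens_measurable joint]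
    by auto
qed

end
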